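(* Assume the setting in the context, with a decomposition of $\mathcal X$ over $A$, a cost function $g\in\mathcal G_s$ and a discount factor $\alpha\in(0,1)$. Then the family $\{(A,B|_{\mathcal E_i},g,\alpha)\}_{i\in\mathcal I}$ is a decomposition (in the sense of Definition 1) of $(A,B,g,\alpha)$ if and only if for every $x\in\mathcal X$ there exists an optimal policy at $x$ for $(A,B,g,\alpha)$ all of whose components lie in $\bigoplus_{i\in\mathcal I}\mathcal E_i$, i.e. $$\operatorname*{argmin}_{\pi\in\mathcal U^{\mathbb Z_+}}J(x,\pi)\;\cap\;\Big[\bigoplus_{i\in\mathcal I}\mathcal E_i\Big]^{\mathbb Z_+}\neq\emptyset\qquad\forall x\in\mathcal X.$$
   Context: Let $\mathcal F$ be a field and $\mathcal X,\mathcal U$ finite-dimensional vector spaces over $\mathcal F$. Let $A:\mathcal X\to\mathcal X$ and $B:\mathcal U\to\mathcal X$ be linear maps with $B$ injective, and consider the system $x_{t+1}=Ax_t+Bu_t$. Let $g:\mathcal X\to\mathbb R_{\ge 0}$ satisfy $g(x)=0\iff x=0$. Standing assumption: all minima appearing below are attained. Infinite-horizon problem $(A,B,g,\alpha)$, $\alpha\in(0,1)$: a policy $\pi$ assigns to each initial state $x_0$ an input sequence $\pi(x_0)=(\pi_t(x_0))_{t\in\mathbb Z_+}\in\mathcal U^{\mathbb Z_+}$; its cost is $J(x_0,\pi)=\sum_{t=0}^{\infty}\alpha^t g(x_t)$ with $x_{t+1}=Ax_t+B\pi_t(x_0)$. The optimal cost is $J^*(x_0)=\min_\pi J(x_0,\pi)$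 and a policy attaining it is optimal at $x_0$. A decomposition of $\mathcal X$ over $A$ is a direct sum $\mathcal X=\mathcal X_1\oplus\cdots\oplus\mathcal X_r$ with $r>1$ and $A\mathcal X_i\subseteq\mathcal X_i$ for all $i\in\mathcal I=\{1,\dots,r\}$. Write $\rho_i:\mathcal X\to\mathcal X_i$ for the projection onto $\mathcal X_i$ along the other summands. $\mathcal G_s$ is the set of functions $h:\mathcal X\to\mathbb R_{\ge0}$ with $h(x)=\sum_{i\in\mathcal I}h(\rho_i(x))$ for all $x$. Let $\mathcal E_i=\{u\in\mathcal U: Bu\in\mathcal X_i\}$. Subproblem $(A,B|_{\mathcal E_i},g,\alpha)$: the system $x_{i,t+1}=Ax_{i,t}+B\bar u_{i,t}$ with states in $\mathcal X_i$, inputs in $\mathcal E_i$, policies $\bar\pi_i(x_{i,0})\in\mathcal E_i^{\mathbb Z_+}$, cost $\bar J_i(x_{i,0},\bar\pi_i)=\sum_{t\ge0}\alpha^tg(x_{i,t})$, optimal cost $\bar J_i^*$ and optimal policies $\bar\pi_i^*$. Definition 1: the family $\{(A,B|_{\mathcal E_i},g,\alpha)\}_{i\in\mathcal I}$ is a decomposition of $(A,B,g,\alpha)$ if for every $x\in\mathcal X$: $J^*(x)=\sum_{i\in\mathcal I}\bar J_i^*(\rho_i(x))$, and for every choice of optimal policies $\bar\pi_i^*(\rho_i(x))$, $i\in\mathcal I$, there exists an optimal policy $\pi^*(x)$ of $(A,B,g,\alpha)$ with $\pi^*(x)=\sum_{i\in\mathcal I}\bar\pi_i^*(\rho_i(x))$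 (componentwise sum). *)

theory Defs
  imports Complex_Main "HOL-Library.Extended_Nonnegative_Real"
begin

fun traj :: "('x::ab_group_add \<Rightarrow> 'x) \<Rightarrow> ('u \<Rightarrow> 'x) \<Rightarrow> 'x \<Rightarrow> (nat \<Rightarrow> 'u) \<Rightarrow> nat \<Rightarrow> 'x" where
  "traj A B x0 u 0 = x0"
| "traj A B x0 u (Suc t) = A (traj A B x0 u t) + B (u t)"

definition cost :: "('x::ab_group_add \<Rightarrow> 'x) \<Rightarrow> ('u \<Rightarrow> 'x) \<Rightarrow> ('x \<Rightarrow> real) \<Rightarrow> real \<Rightarrow> 'x \<Rightarrow> (nat \<Rightarrow> 'u) \<Rightarrow> ennreal" where
  "cost A B g \<alpha> x0 u = (\<Sum>t. ennreal (\<alpha> ^ t * g (traj A B x0 u t)))"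

text \<open>Optimal cost over input sequences with values in the input set Uset
  (Uset = UNIV for the full problem, Uset = E_i for subproblem i).\<close>
definition optcost :: "('x::ab_group_add \<Rightarrow> 'x) \<Rightarrow> ('u \<Rightarrow> 'x) \<Rightarrow> 'u set \<Rightarrow> ('x \<Rightarrow> real) \<Rightarrow> real \<Rightarrow> 'x \<Rightarrow> ennreal" where
  "optcost A B Uset g \<alpha> x0 = (INF u \<in> {u. \<forall>t. u t \<in> Uset}. cost A B g \<alpha> x0 u)"

definition is_optimal :: "('x::ab_group_add \<Rightarrow> 'x) \<Rightarrow> ('u \<Rightarrow> 'x) \<Rightarrow> 'u set \<Rightarrow> ('x \<Rightarrow> real) \<Rightarrow> real \<Rightarrow> 'x \<Rightarrow> (nat \<Rightarrow> 'u) \<Rightarrow> bool" where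
  "is_optimal A B Uset g \<alpha> x0 u \<longleftrightarrow> (\<forall>t. u t \<in> Uset) \<and> cost A B g \<alpha> x0 u = optcost A B Uset g \<alpha> x0"

definition is_direct_sum :: "nat set \<Rightarrow> (nat \<Rightarrow> 'x::ab_group_add set) \<Rightarrow> bool" where
  "is_direct_sum I Xs \<longleftrightarrow>
     (\<forall>x. \<exists>y. (\<forall>i\<in>I. y i \<in> Xs i) \<and> x = (\<Sum>i\<in>I. y i)) \<and>
     (\<forall>y. (\<forall>i\<in>I. y i \<in> Xs i) \<and> (\<Sum>i\<in>I. y i) = 0 \<longrightarrow> (\<forall>i\<in>I. y i = 0))"

definition proj :: "nat set \<Rightarrow> (nat \<Rightarrow> 'x::ab_group_add set) \<Rightarrow> nat \<Rightarrow> 'x \<Rightarrow> 'x" where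
  "proj I Xs i x = (THE v. \<exists>y. (\<forall>j\<in>I. y j \<in> Xs j) \<and> x = (\<Sum>j\<in>I. y j) \<and> v = y i)"

definition Eset :: "('u \<Rightarrow> 'x) \<Rightarrow> 'x set \<Rightarrow> 'u set" where
  "Eset B Xi = {u. B u \<in> Xi}"

definition is_problem_decomposition ::
  "nat set \<Rightarrow> (nat \<Rightarrow> 'x::ab_group_add set) \<Rightarrow> ('x \<Rightarrow> 'x) \<Rightarrow> ('u::ab_group_add \<Rightarrow> 'x) \<Rightarrow> ('x \<Rightarrow> real) \<Rightarrow> real \<Rightarrow> bool" where
  "is_problem_decomposition I Xs A B g \<alpha> \<longleftrightarrow>
     (\<forall>x. optcost A B UNIV g \<alpha> x = (\<Sum>i\<in>I. optcost A B (Eset B (Xs i)) g \<alpha> (proj I Xs i x))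
        \<and> (\<forall>ubar. (\<forall>i\<in>I. is_optimal A B (Eset B (Xs i)) g \<alpha> (proj I Xs i x) (ubar i))
                 \<longrightarrow> is_optimal A B UNIV g \<alpha> x (\<lambda>t. \<Sum>i\<in>I. ubar i t)))"

end

theory Submission
  imports Defs
begin

(* Since A is additive and every summand X_i is A-invariant, the
   trajectory generated by a summed initial state and summed inputs with
   components u_i in E_i is the sum of the component trajectories, each of which
   stays in X_i.  Separability of g then splits the cost:
     J(sum_i x_i, sum_i u_i) = sum_i J_i(x_i, u_i).                       (S)
   Summing optimal subproblem policies therefore always gives
   J*(x) <= sum_i J_i*(rho_i x), with equality attained by that summed policy.
   Conversely, if some optimal policy for x takes values in the direct sum of
   the E_i, (S) applied to it gives J*(x) >= sum_i J_i*(rho_i x).  Hence the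
   cost identity of Definition 1 holds exactly when optimal policies can be
   found in (+)_i E_i, and then every sum of optimal subpolicies is optimal. *)

definition input_sum :: "nat set \<Rightarrow> (nat \<Rightarrow> 'x set) \<Rightarrow> ('u::ab_group_add \<Rightarrow> 'x) \<Rightarrow> 'u set" where
  "input_sum I Xs B = {v. \<exists>e. (\<forall>i\<in>I. e i \<in> Eset B (Xs i)) \<and> v = (\<Sum>i\<in>I. e i)}"

lemma traj_superposition:
  fixes A :: "'x::ab_group_add \<Rightarrow> 'x" and B :: "'u::ab_group_add \<Rightarrow> 'x" and I :: "'i set"
  assumes A_add: "\<And>a b. A (a + b) = A a + A b" and B_add: "\<And>a b. B (a + b) = B a + B b"
  shows "traj A B (\<Sum>i\<in>I. x0 i) (\<lambda>t. \<Sum>i\<in>I. e i t) t = (\<Sum>i\<in>I. traj A B (x0 i) (e i) t)"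
proof (induction t)
  case 0
  then show ?case by simp
next
  case (Suc t)
  have A_sum: "A (\<Sum>i\<in>I. f i) = (\<Sum>i\<in>I. A (f i))" for f :: "'i \<Rightarrow> 'x"
    using sum_comp_morphism[of A f I] A_add A_add[of 0 0] by (simp add: o_def)
  have B_sum: "B (\<Sum>i\<in>I. f i) = (\<Sum>i\<in>I. B (f i))" for f :: "'i \<Rightarrow> 'u"
    using sum_comp_morphism[of B f I] B_add B_add[of 0 0] by (simp add: o_def)
  show ?case using Suc by (simp add: A_sum B_sum sum.distrib)
qed

lemma traj_invariant:
  assumes "x0 \<in> S" "\<And>t. B (e t) \<in> S" "A ` S \<subseteq> S" "\<And>a b. a \<in> S \<Longrightarrow> b \<in> S \<Longrightarrow> a + b \<in> S"
  shows "traj A B x0 e t \<in> S"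
  using assms by (induction t) auto

lemma optcost_le_cost:
  assumes "\<forall>t. u t \<in> U"
  shows "optcost A B U g \<alpha> x \<le> cost A B g \<alpha> x u"
  unfolding optcost_def by (rule INF_lower) (use assms in simp)

locale decomposed_system =
  fixes A :: "'x::ab_group_add \<Rightarrow> 'x" and B :: "'u::ab_group_add \<Rightarrow> 'x"
    and g :: "'x \<Rightarrow> real" and \<alpha> :: real and I :: "nat set" and Xs :: "nat \<Rightarrow> 'x set"
  assumes A_add: "\<And>a b. A (a + b) = A a + A b"
    and B_add: "\<And>a b. B (a + b) = B a + B b"
    and Xs_add: "\<And>i a b. i \<in> I \<Longrightarrow> a \<in> Xs i \<Longrightarrow> b \<in> Xs i \<Longrightarrow> a + b \<in> Xs i"
    and Xs_diff: "\<And>i a b. i \<in> I \<Longrightarrow> a \<in> Xs i \<Longrightarrow> b \<in> Xs i \<Longrightarrow> a - b \<in> Xs i"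
    and A_inv: "\<And>i. i \<in> I \<Longrightarrow> A ` Xs i \<subseteq> Xs i"
    and direct_sum: "is_direct_sum I Xs"
    and g_nonneg: "\<And>x. 0 \<le> g x"
    and g_sep: "\<And>x. g x = (\<Sum>i\<in>I. g (proj I Xs i x))"
    and \<alpha>_nonneg: "0 \<le> \<alpha>"
begin

lemma proj_sum:
  assumes y: "\<forall>j\<in>I. y j \<in> Xs j" and i: "i \<in> I"
  shows "proj I Xs i (\<Sum>j\<in>I. y j) = y i"
  unfolding proj_def
proof (rule the_equality)
  show "\<exists>y'. (\<forall>j\<in>I. y' j \<in> Xs j) \<and> (\<Sum>j\<in>I. y j) = (\<Sum>j\<in>I. y' j) \<and> y i = y' i"
    using y by blast
next
  fix v assume "\<exists>y'. (\<forall>j\<in>I. y' j \<in> Xs j) \<and> (\<Sum>j\<in>I. y j) = (\<Sum>j\<in>I. y' j) \<and> v = y' i"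
  then obtain y' where y': "\<forall>j\<in>I. y' j \<in> Xs j" "(\<Sum>j\<in>I. y j) = (\<Sum>j\<in>I. y' j)" "v = y' i"
    by blast
  have "\<forall>j\<in>I. y j - y' j \<in> Xs j" using y y'(1) Xs_diff by blast
  moreover have "(\<Sum>j\<in>I. y j - y' j) = 0" using y'(2) by (simp add: sum_subtractf)
  ultimately have "\<forall>j\<in>I. y j - y' j = 0"
    using direct_sum unfolding is_direct_sum_def by (metis (no_types, lifting))
  then show "v = y i" using i y'(3) by simp
qed

lemma proj_decomposition:
  shows "(\<Sum>i\<in>I. proj I Xs i x) = x" and "\<And>i. i \<in> I \<Longrightarrow> proj I Xs i x \<in> Xs i"
proof -
  obtain y where y: "\<forall>i\<in>I. y i \<in> Xs i" "x = (\<Sum>i\<in>I. y i)"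
    using direct_sum unfolding is_direct_sum_def by blast
  then have "\<forall>i\<in>I. proj I Xs i x = y i" using proj_sum by simp
  then show "(\<Sum>i\<in>I. proj I Xs i x) = x" and "\<And>i. i \<in> I \<Longrightarrow> proj I Xs i x \<in> Xs i"
    using y by simp_all
qed

lemma cost_superposition:
  assumes x0: "\<forall>i\<in>I. x0 i \<in> Xs i" and e: "\<forall>i\<in>I. \<forall>t. e i t \<in> Eset B (Xs i)"
  shows "cost A B g \<alpha> (\<Sum>i\<in>I. x0 i) (\<lambda>t. \<Sum>i\<in>I. e i t) = (\<Sum>i\<in>I. cost A B g \<alpha> (x0 i) (e i))"
proof -
  have traj_in: "\<forall>i\<in>I. traj A B (x0 i) (e i) t \<in> Xs i" for t
  proof
    fix i assume "i \<in> I"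
    then show "traj A B (x0 i) (e i) t \<in> Xs i"
      using x0 e A_inv Xs_add by (intro traj_invariant) (auto simp: Eset_def)
  qed
  have g_split: "g (traj A B (\<Sum>i\<in>I. x0 i) (\<lambda>t. \<Sum>i\<in>I. e i t) t)
      = (\<Sum>i\<in>I. g (traj A B (x0 i) (e i) t))" for t
    unfolding traj_superposition[OF A_add B_add]
    by (subst g_sep) (use proj_sum[OF traj_in] in simp)
  have "cost A B g \<alpha> (\<Sum>i\<in>I. x0 i) (\<lambda>t. \<Sum>i\<in>I. e i t)
      = (\<Sum>t. \<Sum>i\<in>I. ennreal (\<alpha> ^ t * g (traj A B (x0 i) (e i) t)))"
    unfolding cost_def g_split
    by (subst sum_ennreal) (auto simp: sum_distrib_left g_nonneg \<alpha>_nonneg)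
  also have "\<dots> = (\<Sum>i\<in>I. cost A B g \<alpha> (x0 i) (e i))"
    unfolding cost_def by (rule suminf_sum) simp
  finally show ?thesis .
qed

lemma optimal_subpolicies:
  assumes "\<forall>i\<in>I. \<forall>x\<in>Xs i. \<exists>u. is_optimal A B (Eset B (Xs i)) g \<alpha> x u"
  obtains ub where "\<forall>i\<in>I. is_optimal A B (Eset B (Xs i)) g \<alpha> (proj I Xs i x) (ub i)"
proof -
  have "\<forall>i\<in>I. \<exists>u. is_optimal A B (Eset B (Xs i)) g \<alpha> (proj I Xs i x) u"
    using assms proj_decomposition(2) by blast
  then obtain ub where "\<forall>i\<in>I. is_optimal A B (Eset B (Xs i)) g \<alpha> (proj I Xs i x) (ub i)"
    by (rule bchoice[THEN exE])
  then show ?thesis by (rule that)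
qed

lemma cost_of_summed_optimal:
  assumes opt: "\<forall>i\<in>I. is_optimal A B (Eset B (Xs i)) g \<alpha> (proj I Xs i x) (ub i)"
  shows "cost A B g \<alpha> x (\<lambda>t. \<Sum>i\<in>I. ub i t)
       = (\<Sum>i\<in>I. optcost A B (Eset B (Xs i)) g \<alpha> (proj I Xs i x))"
  using cost_superposition[of "\<lambda>i. proj I Xs i x" ub] opt
  by (simp add: proj_decomposition is_optimal_def)

lemma summed_optcost_le_cost:
  assumes u: "\<forall>t. u t \<in> input_sum I Xs B"
  shows "(\<Sum>i\<in>I. optcost A B (Eset B (Xs i)) g \<alpha> (proj I Xs i x)) \<le> cost A B g \<alpha> x u"
proof -
  have "\<forall>t. \<exists>e. (\<forall>i\<in>I. e i \<in> Eset B (Xs i)) \<and> u t = (\<Sum>i\<in>I. e i)"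
    using u unfolding input_sum_def by blast
  from choice[OF this] obtain E
    where E: "\<forall>t. (\<forall>i\<in>I. E t i \<in> Eset B (Xs i)) \<and> u t = (\<Sum>i\<in>I. E t i)"
    by blast
  have E_in: "\<forall>i\<in>I. \<forall>t. E t i \<in> Eset B (Xs i)" and u_eq: "u = (\<lambda>t. \<Sum>i\<in>I. E t i)"
    using E by auto
  have x_in: "\<forall>i\<in>I. proj I Xs i x \<in> Xs i"
    using proj_decomposition(2) by blast
  have "(\<Sum>i\<in>I. optcost A B (Eset B (Xs i)) g \<alpha> (proj I Xs i x))
      \<le> (\<Sum>i\<in>I. cost A B g \<alpha> (proj I Xs i x) (\<lambda>t. E t i))"
    by (rule sum_mono, rule optcost_le_cost) (use E_in in blast)
  also have "\<dots> = cost A B g \<alpha> x u"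
    using cost_superposition[OF x_in E_in] unfolding proj_decomposition(1) u_eq ..
  finally show ?thesis .
qed

lemma optimal_in_input_sum_if_decomposition:
  assumes dec: "is_problem_decomposition I Xs A B g \<alpha>"
    and attained_sub: "\<forall>i\<in>I. \<forall>x\<in>Xs i. \<exists>u. is_optimal A B (Eset B (Xs i)) g \<alpha> x u"
  shows "\<exists>u. is_optimal A B UNIV g \<alpha> x u \<and> (\<forall>t. u t \<in> input_sum I Xs B)"
proof -
  obtain ub where ub: "\<forall>i\<in>I. is_optimal A B (Eset B (Xs i)) g \<alpha> (proj I Xs i x) (ub i)"
    using optimal_subpolicies[OF attained_sub] .
  then have "is_optimal A B UNIV g \<alpha> x (\<lambda>t. \<Sum>i\<in>I. ub i t)"
    using dec unfolding is_problem_decomposition_def by blast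
  moreover have "(\<Sum>i\<in>I. ub i t) \<in> input_sum I Xs B" for t
    using ub unfolding input_sum_def is_optimal_def by (intro CollectI exI[of _ "\<lambda>i. ub i t"]) auto
  ultimately show ?thesis by blast
qed

text \<open>If optimal policies with values in \<open>E_1 \<oplus> ... \<oplus> E_r\<close> exist, the two
  bounds on the optimal cost meet, and the problem decomposes.\<close>
lemma decomposition_if_optimal_in_input_sum:
  assumes opt: "\<forall>x. \<exists>u. is_optimal A B UNIV g \<alpha> x u \<and> (\<forall>t. u t \<in> input_sum I Xs B)"
    and attained_sub: "\<forall>i\<in>I. \<forall>x\<in>Xs i. \<exists>u. is_optimal A B (Eset B (Xs i)) g \<alpha> x u"
  shows "is_problem_decomposition I Xs A B g \<alpha>"
  unfolding is_problem_decomposition_def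
proof (intro allI conjI impI)
  fix x
  let ?S = "\<Sum>i\<in>I. optcost A B (Eset B (Xs i)) g \<alpha> (proj I Xs i x)"
  obtain u where u: "is_optimal A B UNIV g \<alpha> x u" "\<forall>t. u t \<in> input_sum I Xs B"
    using opt by blast
  have lower: "?S \<le> optcost A B UNIV g \<alpha> x"
    using summed_optcost_le_cost[OF u(2), where x=x] u(1) unfolding is_optimal_def by simp
  obtain ub where ub: "\<forall>i\<in>I. is_optimal A B (Eset B (Xs i)) g \<alpha> (proj I Xs i x) (ub i)"
    using optimal_subpolicies[OF attained_sub] .
  have "optcost A B UNIV g \<alpha> x \<le> cost A B g \<alpha> x (\<lambda>t. \<Sum>i\<in>I. ub i t)"
    by (rule optcost_le_cost) simp
  also have "\<dots> = ?S"
    using cost_of_summed_optimal[OF ub] .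
  finally have upper: "optcost A B UNIV g \<alpha> x \<le> ?S" .
  from lower upper show opt_eq: "optcost A B UNIV g \<alpha> x = ?S" by simp
  fix ubar
  assume ubar: "\<forall>i\<in>I. is_optimal A B (Eset B (Xs i)) g \<alpha> (proj I Xs i x) (ubar i)"
  have "cost A B g \<alpha> x (\<lambda>t. \<Sum>i\<in>I. ubar i t) = optcost A B UNIV g \<alpha> x"
    unfolding cost_of_summed_optimal[OF ubar] opt_eq ..
  then show "is_optimal A B UNIV g \<alpha> x (\<lambda>t. \<Sum>i\<in>I. ubar i t)"
    unfolding is_optimal_def by simp
qed

lemma decomposition_iff_optimal_in_input_sum:
  assumes attained_sub: "\<forall>i\<in>I. \<forall>x\<in>Xs i. \<exists>u. is_optimal A B (Eset B (Xs i)) g \<alpha> x u"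
  shows "is_problem_decomposition I Xs A B g \<alpha> \<longleftrightarrow>
    (\<forall>x. \<exists>u. is_optimal A B UNIV g \<alpha> x u \<and> (\<forall>t. u t \<in> input_sum I Xs B))"
  using optimal_in_input_sum_if_decomposition[OF _ attained_sub]
    decomposition_if_optimal_in_input_sum[OF _ attained_sub] by blast

end

lemma decomposed_system_of_subspaces:
  assumes linA: "Vector_Spaces.linear sX sX A" and linB: "Vector_Spaces.linear sU sX B"
    and subsp: "\<forall>i\<in>I. module.subspace sX (Xs i)"
    and inv: "\<forall>i\<in>I. A ` Xs i \<subseteq> Xs i"
    and dsum: "is_direct_sum I Xs"
    and g_nonneg: "\<forall>x. 0 \<le> g x"
    and g_sep: "\<forall>x. g x = (\<Sum>i\<in>I. g (proj I Xs i x))"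
    and \<alpha>_nonneg: "0 \<le> \<alpha>"
  shows "decomposed_system A B g \<alpha> I Xs"
proof
  have modX: "module sX"
    using linA unfolding Vector_Spaces.linear_iff vector_space_def module_def by simp
  show "A (a + b) = A a + A b" for a b
    using linA unfolding Vector_Spaces.linear_iff by simp
  show "B (a + b) = B a + B b" for a b
    using linB unfolding Vector_Spaces.linear_iff by simp
  fix i a b assume i: "i \<in> I" and ab: "a \<in> Xs i" "b \<in> Xs i"
  have Xi: "module.subspace sX (Xs i)" using subsp i by blast
  show "a + b \<in> Xs i" by (rule module.subspace_add[OF modX Xi ab])
  show "a - b \<in> Xs i" by (rule module.subspace_diff[OF modX Xi ab])
next
  show "A ` Xs i \<subseteq> Xs i" if "i \<in> I" for i using inv that by blast
  show "is_direct_sum I Xs" by (rule dsum)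
  show "0 \<le> g x" for x by (rule g_nonneg[rule_format])
  show "g x = (\<Sum>i\<in>I. g (proj I Xs i x))" for x by (rule g_sep[rule_format])
  show "0 \<le> \<alpha>" by (rule \<alpha>_nonneg)
qed

theorem lemma2:
  fixes sX :: "'f::field \<Rightarrow> 'x::ab_group_add \<Rightarrow> 'x"
    and sU :: "'f \<Rightarrow> 'u::ab_group_add \<Rightarrow> 'u"
    and A :: "'x \<Rightarrow> 'x" and B :: "'u \<Rightarrow> 'x"
    and g :: "'x \<Rightarrow> real" and \<alpha> :: real
    and r :: nat and Xs :: "nat \<Rightarrow> 'x set"
  assumes fdX: "\<exists>bX. finite_dimensional_vector_space sX bX"
    and fdU: "\<exists>bU. finite_dimensional_vector_space sU bU"
    and linA: "Vector_Spaces.linear sX sX A"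
    and linB: "Vector_Spaces.linear sU sX B"
    and injB: "inj B"
    and g_nonneg: "\<forall>x. g x \<ge> 0"
    and g_zero: "\<forall>x. g x = 0 \<longleftrightarrow> x = 0"
    and alpha: "0 < \<alpha>" "\<alpha> < 1"
    and r_gt: "r > 1"
    and subsp: "\<forall>i\<in>{1..r}. module.subspace sX (Xs i)"
    and inv: "\<forall>i\<in>{1..r}. A ` Xs i \<subseteq> Xs i"
    and dsum: "is_direct_sum {1..r} Xs"
    and g_sep: "\<forall>x. g x = (\<Sum>i\<in>{1..r}. g (proj {1..r} Xs i x))"
    and attained: "\<forall>x. \<exists>u. is_optimal A B UNIV g \<alpha> x u"
    and attained_sub: "\<forall>i\<in>{1..r}. \<forall>x\<in>Xs i. \<exists>u. is_optimal A B (Eset B (Xs i)) g \<alpha> x u"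
  shows "is_problem_decomposition {1..r} Xs A B g \<alpha> \<longleftrightarrow>
    (\<forall>x. \<exists>u. is_optimal A B UNIV g \<alpha> x u \<and>
        (\<forall>t. u t \<in> {v. \<exists>e. (\<forall>i\<in>{1..r}. e i \<in> Eset B (Xs i)) \<and> v = (\<Sum>i\<in>{1..r}. e i)}))"
proof -
  interpret decomposed_system A B g \<alpha> "{1..r}" Xs
    using decomposed_system_of_subspaces[OF linA linB subsp inv dsum g_nonneg g_sep] alpha
    by simp
  show ?thesis
    using decomposition_iff_optimal_in_input_sum[OF attained_sub]
    by (simp only: input_sum_def)
qed

end
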